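(* Let $X,Y$ be real locally convex Hausdorff topological vector spaces, $M:X\to Y$ a continuous linear mapping, $D\subset X$ a generalized polyhedral convex set, and $K\subset Y$ a polyhedral convex cone. Consider the problem (VLP): $\min_K\{Mx\mid x\in D\}$. Then the set $E^w$ of weakly efficient solutions of (VLP) is the union of finitely many generalized polyhedral convex sets.
   Context: $\langle x^*,x\rangle$ denotes the value of a continuous linear functional $x^*$ at $x$. A generalized polyhedral convex set in $X$ is a set of the form $\{x\in L\mid \langle x_i^*,x\rangle\le\alpha_i,\ i=1,\dots,p\}$ with $x_i^*\in X^*$, $\alpha_i\in\mathbb{R}$, and $L\subset X$ a closed affine subspace; a polyhedral convex cone in $Y$ is a cone of the form $\{y\in Y\mid \langle y_i^*,y\rangle\le\beta_i,\ i=1,\dots,q\}$ with $y_i^*\in Y^*$, $\beta_i\in\mathbb{R}$. A point $u\in D$ is a weakly efficient solution of (VLP) if there is no $x\in D$ with $Mu-Mx\in\operatorname{int}K$, where $\operatorname{int}K$ is the topological interior of $K$. *)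

theory Defs
  imports "HOL-Analysis.Analysis"
begin

definition lc_tvs :: "'a::{real_vector,t2_space} itself \<Rightarrow> bool" where
  "lc_tvs _ \<longleftrightarrow>
     continuous_on UNIV (\<lambda>(x::'a, y::'a). x + y) \<and>
     continuous_on UNIV (\<lambda>(c::real, x::'a). c *\<^sub>R x) \<and>
     (\<forall>U::'a set. open U \<and> 0 \<in> U \<longrightarrow> (\<exists>V. open V \<and> convex V \<and> 0 \<in> V \<and> V \<subseteq> U))"

definition cont_functional :: "('a::{real_vector,topological_space} \<Rightarrow> real) \<Rightarrow> bool" where
  "cont_functional f \<longleftrightarrow> linear f \<and> continuous_on UNIV f"

definition gen_polyhedral :: "'a::{real_vector,topological_space} set \<Rightarrow> bool" where
  "gen_polyhedral S \<longleftrightarrow>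
     (\<exists>L p (xs :: nat \<Rightarrow> 'a \<Rightarrow> real) (\<alpha> :: nat \<Rightarrow> real).
        closed L \<and> affine L \<and> (\<forall>i<p. cont_functional (xs i)) \<and>
        S = {x \<in> L. \<forall>i<p. xs i x \<le> \<alpha> i})"

definition polyhedral_cone :: "'a::{real_vector,topological_space} set \<Rightarrow> bool" where
  "polyhedral_cone K \<longleftrightarrow> cone K \<and>
     (\<exists>q (ys :: nat \<Rightarrow> 'a \<Rightarrow> real) (\<beta> :: nat \<Rightarrow> real).
        (\<forall>j<q. cont_functional (ys j)) \<and> K = {y. \<forall>j<q. ys j y \<le> \<beta> j})"

definition weakly_efficient ::
  "('a \<Rightarrow> 'b::{real_vector,topological_space}) \<Rightarrow> 'a set \<Rightarrow> 'b set \<Rightarrow> 'a set" where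
  "weakly_efficient M D K = {u \<in> D. \<not> (\<exists>x\<in>D. M u - M x \<in> interior K)}"

end

theory Submission
  imports Defs
begin

text \<open>Write \<open>D = {x \<in> L. a\<^sub>i x \<le> \<alpha>\<^sub>i, i < p}\<close>. Whether a feasible point \<open>u\<close> is weakly
  efficient depends only on its set \<open>A\<close> of active constraints: \<open>u\<close> is weakly efficient iff
  there are no \<open>x, y \<in> L\<close> with \<open>a\<^sub>i x \<le> a\<^sub>i y\<close> for \<open>i \<in> A\<close> and \<open>M y - M x \<in> int K\<close>.
  Indeed, for such a pair the point \<open>u + t (x - y)\<close> is feasible for small \<open>t > 0\<close>, because the
  inactive constraints have slack, and it improves \<open>u\<close> since \<open>int K\<close> is stable under positive
  scaling. Hence \<open>E\<^sup>w\<close> is the union of the faces \<open>{u \<in> D. a\<^sub>i u = \<alpha>\<^sub>i, i \<in> A}\<close> over the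
  finitely many index sets \<open>A\<close> admitting no such pair, and each face is generalized polyhedral.\<close>

lemma cont_functional_uminus:
  assumes "cont_functional f"
  shows "cont_functional (\<lambda>x. - f x)"
  using assms unfolding cont_functional_def
  by (simp add: linear_compose_neg continuous_on_minus)

lemma gen_polyhedral_Int_halfspace:
  assumes "gen_polyhedral S" and "cont_functional f"
  shows "gen_polyhedral (S \<inter> {x. f x \<le> c})"
proof -
  obtain L p and xs :: "nat \<Rightarrow> 'a \<Rightarrow> real" and \<alpha>
    where L: "closed L" "affine L" and xs: "\<forall>i<p. cont_functional (xs i)"
    and S: "S = {x \<in> L. \<forall>i<p. xs i x \<le> \<alpha> i}"
    using assms(1) unfolding gen_polyhedral_def by blast
  have "S \<inter> {x. f x \<le> c} = {x \<in> L. \<forall>i<Suc p. (xs(p := f)) i x \<le> (\<alpha>(p := c)) i}"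
    unfolding S by (auto simp: less_Suc_eq)
  moreover have "\<forall>i<Suc p. cont_functional ((xs(p := f)) i)"
    using xs assms(2) by (simp add: less_Suc_eq)
  ultimately show ?thesis
    unfolding gen_polyhedral_def using L by blast
qed

lemma gen_polyhedral_Int_hyperplanes:
  assumes "finite A" and "gen_polyhedral S" and "\<forall>i\<in>A. cont_functional (a i)"
  shows "gen_polyhedral {x \<in> S. \<forall>i\<in>A. a i x = \<alpha> i}"
  using assms(1,3)
proof (induction A rule: finite_induct)
  case empty
  then show ?case using assms(2) by simp
next
  case (insert i A)
  have "{x \<in> S. \<forall>j\<in>insert i A. a j x = \<alpha> j} =
      {x \<in> S. \<forall>j\<in>A. a j x = \<alpha> j} \<inter> {x. a i x \<le> \<alpha> i} \<inter> {x. - a i x \<le> - \<alpha> i}"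
    by auto
  also have "gen_polyhedral \<dots>"
    using insert by (intro gen_polyhedral_Int_halfspace cont_functional_uminus) auto
  finally show ?case .
qed

lemma interior_cone_scaleR:
  fixes K :: "'b::{real_vector,topological_space} set"
  assumes scale: "continuous_on UNIV (\<lambda>(c::real, x::'b). c *\<^sub>R x)"
    and "cone K" and y: "y \<in> interior K" and t: "t > 0"
  shows "t *\<^sub>R y \<in> interior K"
proof -
  let ?U = "(\<lambda>v::'b. (1/t) *\<^sub>R v) -` interior K"
  have "continuous_on UNIV (\<lambda>v::'b. (\<lambda>(c::real, x::'b). c *\<^sub>R x) (1/t, v))"
    by (rule continuous_on_compose2[OF scale]) (auto intro: continuous_intros)
  then have "open ?U"
    by (intro continuous_imp_open_vimage) auto
  moreover have "t *\<^sub>R y \<in> ?U"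
    using y t by simp
  moreover have "?U \<subseteq> K"
  proof
    fix v assume "v \<in> ?U"
    then have "(1/t) *\<^sub>R v \<in> K"
      using interior_subset by auto
    then have "t *\<^sub>R ((1/t) *\<^sub>R v) \<in> K"
      using \<open>cone K\<close> t unfolding cone_def by (metis less_imp_le)
    then show "v \<in> K" using t by simp
  qed
  ultimately show ?thesis by (rule interiorI)
qed

lemma exists_pos_mult_less_finite:
  assumes "finite B" and "\<forall>i\<in>B. 0 < c i"
  shows "\<exists>t>0. \<forall>i\<in>B. t * d i < (c i :: real)"
proof -
  have "\<forall>\<^sub>F t in at_right 0. \<forall>i\<in>B. t * d i < c i"
  proof (rule eventually_ball_finite[OF assms(1)], rule ballI)
    fix i assume "i \<in> B"
    have "((\<lambda>t. t * d i) \<longlongrightarrow> 0 * d i) (at_right 0)"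
      by (intro tendsto_intros)
    then show "\<forall>\<^sub>F t in at_right 0. t * d i < c i"
      using assms(2) \<open>i \<in> B\<close> order_tendstoD(2) by fastforce
  qed
  then have "\<forall>\<^sub>F t in at_right 0. 0 < t \<and> (\<forall>i\<in>B. t * d i < c i)"
    by (simp add: eventually_conj eventually_at_right_less)
  then show ?thesis
    using eventually_happens'[OF trivial_limit_at_right_real] by blast
qed

definition no_improving_pair ::
  "'a set \<Rightarrow> (nat \<Rightarrow> 'a \<Rightarrow> real) \<Rightarrow> ('a \<Rightarrow> 'b::{real_vector,topological_space}) \<Rightarrow> 'b set \<Rightarrow>
    nat set \<Rightarrow> bool" where
  "no_improving_pair L a M K A \<longleftrightarrow>
     \<not> (\<exists>x\<in>L. \<exists>y\<in>L. (\<forall>i\<in>A. a i x \<le> a i y) \<and> M y - M x \<in> interior K)"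

lemma exists_pos_step_in_polyhedron:
  fixes a :: "nat \<Rightarrow> 'a::real_vector \<Rightarrow> real"
  assumes "affine L" and a: "\<forall>i<p. linear (a i)"
    and D: "D = {x \<in> L. \<forall>i<p. a i x \<le> \<alpha> i}"
    and "u \<in> D" and "x \<in> L" and "y \<in> L"
    and xy: "\<forall>i<p. a i u = \<alpha> i \<longrightarrow> a i x \<le> a i y"
  shows "\<exists>t>0. u + t *\<^sub>R (x - y) \<in> D"
proof -
  let ?A = "{i. i < p \<and> a i u = \<alpha> i}"
  have "u \<in> L" and u_feasible: "\<forall>i<p. a i u \<le> \<alpha> i"
    using \<open>u \<in> D\<close> unfolding D by auto
  have "\<forall>i\<in>{..<p} - ?A. 0 < \<alpha> i - a i u"
    using u_feasible by (auto simp: less_le)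
  then obtain t where "t > 0" and slack: "\<forall>i\<in>{..<p} - ?A. t * (a i x - a i y) < \<alpha> i - a i u"
    using exists_pos_mult_less_finite[of "{..<p} - ?A" "\<lambda>i. \<alpha> i - a i u" "\<lambda>i. a i x - a i y"]
    by blast
  have "a i (u + t *\<^sub>R (x - y)) \<le> \<alpha> i" if "i < p" for i
  proof -
    have "a i (u + t *\<^sub>R (x - y)) = a i u + t * (a i x - a i y)"
      using a that by (simp add: linear_add linear_diff linear_scale)
    moreover have "t * (a i x - a i y) \<le> \<alpha> i - a i u"
    proof (cases "i \<in> ?A")
      case True
      then show ?thesis using xy \<open>t > 0\<close> by (simp add: mult_nonneg_nonpos)
    next
      case False
      with \<open>i < p\<close> slack have "t * (a i x - a i y) < \<alpha> i - a i u" by blast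
      then show ?thesis by simp
    qed
    ultimately show ?thesis by linarith
  qed
  moreover have "u + t *\<^sub>R (x - y) \<in> L"
    using mem_affine_3_minus[OF \<open>affine L\<close> \<open>u \<in> L\<close> \<open>x \<in> L\<close> \<open>y \<in> L\<close>] .
  ultimately show ?thesis
    using \<open>t > 0\<close> unfolding D by blast
qed

lemma weakly_efficient_imp_no_improving_pair:
  fixes M :: "'a::real_vector \<Rightarrow> 'b::{real_vector,topological_space}"
    and a :: "nat \<Rightarrow> 'a \<Rightarrow> real"
  assumes scale: "continuous_on UNIV (\<lambda>(c::real, x::'b). c *\<^sub>R x)"
    and "cone K" and "linear M" and "affine L" and a: "\<forall>i<p. linear (a i)"
    and D: "D = {x \<in> L. \<forall>i<p. a i x \<le> \<alpha> i}"
    and u: "u \<in> weakly_efficient M D K"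
  shows "no_improving_pair L a M K {i. i < p \<and> a i u = \<alpha> i}"
  unfolding no_improving_pair_def
proof (intro notI, elim bexE conjE)
  fix x y assume "x \<in> L" "y \<in> L" and xy: "\<forall>i\<in>{i. i < p \<and> a i u = \<alpha> i}. a i x \<le> a i y"
    and improving: "M y - M x \<in> interior K"
  have "u \<in> D" using u unfolding weakly_efficient_def by blast
  moreover have "\<forall>i<p. a i u = \<alpha> i \<longrightarrow> a i x \<le> a i y" using xy by simp
  ultimately obtain t where "t > 0" and step: "u + t *\<^sub>R (x - y) \<in> D"
    using exists_pos_step_in_polyhedron[OF \<open>affine L\<close> a D _ \<open>x \<in> L\<close> \<open>y \<in> L\<close>] by blast
  have "M u - M (u + t *\<^sub>R (x - y)) = t *\<^sub>R (M y - M x)"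
    using \<open>linear M\<close> by (simp add: linear_add linear_diff linear_scale algebra_simps)
  also have "\<dots> \<in> interior K"
    using interior_cone_scaleR[OF scale \<open>cone K\<close> improving \<open>t > 0\<close>] .
  finally show False
    using u step unfolding weakly_efficient_def by blast
qed

lemma no_improving_pair_imp_weakly_efficient:
  assumes "no_improving_pair L a M K A" and "A \<subseteq> {..<p}"
    and D: "D = {x \<in> L. \<forall>i<p. a i x \<le> \<alpha> i}"
    and "u \<in> D" and active: "\<forall>i\<in>A. a i u = \<alpha> i"
  shows "u \<in> weakly_efficient M D K"
proof -
  have "M u - M x \<notin> interior K" if "x \<in> D" for x
  proof -
    have "\<forall>i\<in>A. a i x \<le> a i u"
      using \<open>x \<in> D\<close> \<open>A \<subseteq> {..<p}\<close> active unfolding D by auto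
    moreover have "x \<in> L" "u \<in> L"
      using \<open>x \<in> D\<close> \<open>u \<in> D\<close> unfolding D by auto
    ultimately show ?thesis
      using assms(1) unfolding no_improving_pair_def by blast
  qed
  then show ?thesis
    using \<open>u \<in> D\<close> unfolding weakly_efficient_def by blast
qed

lemma weakly_efficient_eq_Union_faces:
  fixes M :: "'a::real_vector \<Rightarrow> 'b::{real_vector,topological_space}"
    and a :: "nat \<Rightarrow> 'a \<Rightarrow> real"
  assumes scale: "continuous_on UNIV (\<lambda>(c::real, x::'b). c *\<^sub>R x)"
    and "cone K" and "linear M" and "affine L" and a: "\<forall>i<p. linear (a i)"
    and D: "D = {x \<in> L. \<forall>i<p. a i x \<le> \<alpha> i}"
  shows "weakly_efficient M D K =
    (\<Union>A\<in>{A \<in> Pow {..<p}. no_improving_pair L a M K A}. {u \<in> D. \<forall>i\<in>A. a i u = \<alpha> i})"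
proof
  show "weakly_efficient M D K \<subseteq> (\<Union>A\<in>{A \<in> Pow {..<p}. no_improving_pair L a M K A}.
      {u \<in> D. \<forall>i\<in>A. a i u = \<alpha> i})"
  proof
    fix u assume u: "u \<in> weakly_efficient M D K"
    then have "no_improving_pair L a M K {i. i < p \<and> a i u = \<alpha> i}"
      by (rule weakly_efficient_imp_no_improving_pair[OF assms])
    moreover have "u \<in> D" using u unfolding weakly_efficient_def by blast
    ultimately show "u \<in> (\<Union>A\<in>{A \<in> Pow {..<p}. no_improving_pair L a M K A}.
        {u \<in> D. \<forall>i\<in>A. a i u = \<alpha> i})"
      by (intro UN_I[of "{i. i < p \<and> a i u = \<alpha> i}"]) auto
  qed
  show "(\<Union>A\<in>{A \<in> Pow {..<p}. no_improving_pair L a M K A}. {u \<in> D. \<forall>i\<in>A. a i u = \<alpha> i})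
      \<subseteq> weakly_efficient M D K"
  proof (rule UN_least, rule subsetI)
    fix A u assume "A \<in> {A \<in> Pow {..<p}. no_improving_pair L a M K A}"
      and "u \<in> {u \<in> D. \<forall>i\<in>A. a i u = \<alpha> i}"
    then show "u \<in> weakly_efficient M D K"
      by (intro no_improving_pair_imp_weakly_efficient[OF _ _ D]) auto
  qed
qed

theorem theorem4p5:
  fixes M :: "'a::{real_vector,t2_space} \<Rightarrow> 'b::{real_vector,t2_space}"
    and D :: "'a set" and K :: "'b set"
  assumes "lc_tvs TYPE('a)" and "lc_tvs TYPE('b)"
    and "linear M" and "continuous_on UNIV M"
    and "gen_polyhedral D"
    and "polyhedral_cone K"
  shows "\<exists>\<F>. finite \<F> \<and> (\<forall>S\<in>\<F>. gen_polyhedral S) \<and> weakly_efficient M D K = \<Union>\<F>"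
proof -
  have scale: "continuous_on UNIV (\<lambda>(c::real, x::'b). c *\<^sub>R x)"
    using assms(2) unfolding lc_tvs_def by blast
  have "cone K" using assms(6) unfolding polyhedral_cone_def by blast
  obtain L p and a :: "nat \<Rightarrow> 'a \<Rightarrow> real" and \<alpha>
    where "affine L" and a: "\<forall>i<p. cont_functional (a i)"
    and D: "D = {x \<in> L. \<forall>i<p. a i x \<le> \<alpha> i}"
    using assms(5) unfolding gen_polyhedral_def by blast
  define face where "face A = {u \<in> D. \<forall>i\<in>A. a i u = \<alpha> i}" for A
  have "weakly_efficient M D K = \<Union> (face ` {A \<in> Pow {..<p}. no_improving_pair L a M K A})"
    unfolding face_def using a
    by (intro weakly_efficient_eq_Union_faces[OF scale \<open>cone K\<close> assms(3) \<open>affine L\<close> _ D])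
      (simp add: cont_functional_def)
  moreover have "gen_polyhedral (face A)" if "A \<subseteq> {..<p}" for A
    unfolding face_def using a finite_subset[OF that] that
    by (intro gen_polyhedral_Int_hyperplanes assms(5)) auto
  then have "\<forall>S \<in> face ` {A \<in> Pow {..<p}. no_improving_pair L a M K A}. gen_polyhedral S"
    by blast
  moreover have "finite (face ` {A \<in> Pow {..<p}. no_improving_pair L a M K A})"
    by simp
  ultimately show ?thesis by blast
qed

end
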